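(* Let $k$ be a field of characteristic $p\ne2$ and $G=\mathrm{SL}_n(k)=\mathrm{SL}(V)$. Assume that $x\in G$ is an involution, $y\in G$ is a unipotent element with quadratic minimal polynomial (i.e. minimal polynomial $(T-1)^2$), and $z\in G$ is a regular unipotent element (a unipotent element with a single Jordan block of size $n$ on $V$). Then $xyz\ne1$. *)

theory Defs
  imports "Jordan_Normal_Form.Jordan_Normal_Form"
begin

definition eval_poly_mat :: "'a::field poly \<Rightarrow> 'a mat \<Rightarrow> 'a mat" where
  "eval_poly_mat p A =
     foldr (\<lambda>c M. c \<cdot>\<^sub>m 1\<^sub>m (dim_row A) + A * M) (coeffs p) (0\<^sub>m (dim_row A) (dim_row A))"

definition is_minimal_polynomial :: "'a::field mat \<Rightarrow> 'a poly \<Rightarrow> bool" where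
  "is_minimal_polynomial A p \<longleftrightarrow>
     monic p \<and> eval_poly_mat p A = 0\<^sub>m (dim_row A) (dim_row A) \<and>
     (\<forall>q. q \<noteq> 0 \<and> eval_poly_mat q A = 0\<^sub>m (dim_row A) (dim_row A) \<longrightarrow> degree p \<le> degree q)"

definition regular_unipotent :: "nat \<Rightarrow> 'a::field mat \<Rightarrow> bool" where
  "regular_unipotent n z \<longleftrightarrow> z \<in> carrier_mat n n \<and> similar_mat z (jordan_block n 1)"

end

theory Submission
  imports Defs
begin

text \<open>
  From x y z = 1 and x^2 = 1 we get x = y z, so g = y z is an involution and it suffices to show
  g = 1. Write y = 1 + N with N^2 = 0, so that y^-1 = 1 - N, and z = 1 + B with B nilpotent.
  Then g^2 = 1 says z y z = 1 - N, that is N c = - B c - B N z for c = 2 + B, which is a unit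
  because 2 is. Solving for N, N = - B - P w with P = B N and w = z c^-1 commuting with B, and
  substituting this twice into N^2 = 0 gives P = B (w P + P w^2 N); iterating puts P into B^k R
  for every k, so P = 0. Now N c = - B c gives N = - B, and g = (1 + N) (1 - N) = 1.
  Only the unipotence of z, the relation (y - 1)^2 = 0 and 2 \<noteq> 0 are used.
\<close>

text \<open>The normaliser behind the \<open>algebra\<close> method lacks the right unit law.\<close>
lemmas (in ring) [algebra ring "zero R" "add R" "a_inv R" "a_minus R" "one R" "mult R"] = r_one

context ring begin

lemma one_minus_mult_geometric_sum:
  fixes k :: nat
  assumes a: "a \<in> carrier R"
  shows "(\<one> \<ominus> a) \<otimes> (\<Oplus>i\<in>{..<k}. a [^] i) = \<one> \<ominus> a [^] k \<and>
    (\<Oplus>i\<in>{..<k}. a [^] i) \<otimes> (\<one> \<ominus> a) = \<one> \<ominus> a [^] k"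
proof (induction k)
  case 0
  show ?case using a by (simp add: ring_simprules)
next
  case (Suc k)
  have sum: "(\<Oplus>i\<in>{..<Suc k}. a [^] i) = a [^] k \<oplus> (\<Oplus>i\<in>{..<k}. a [^] i)"
    using a by (simp add: lessThan_Suc finsum_insert)
  have "a [^] Suc k = a \<otimes> a [^] k" "a [^] Suc k = a [^] k \<otimes> a"
    using nat_pow_Suc2[OF a] by simp_all
  then show ?case using a Suc unfolding sum by (simp add: ring_simprules)
qed

lemma one_minus_nilpotent_Units:
  assumes a: "a \<in> carrier R" and nil: "a [^] (k::nat) = \<zero>"
  shows "\<one> \<ominus> a \<in> Units R"
  using one_minus_mult_geometric_sum[OF a, of k] a unfolding nil Units_def
  by (auto simp: ring_simprules)

lemma Units_inv_commute:
  assumes u: "u \<in> Units R" and a: "a \<in> carrier R" and comm: "u \<otimes> a = a \<otimes> u"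
  shows "inv u \<otimes> a = a \<otimes> inv u"
proof -
  have uc: "u \<in> carrier R" "inv u \<in> carrier R" using u by auto
  have "inv u \<otimes> a \<otimes> (u \<otimes> inv u) = inv u \<otimes> (u \<otimes> a) \<otimes> inv u"
    using uc a by (simp add: comm m_assoc)
  then show ?thesis using u uc a by (simp add: m_assoc[symmetric])
qed

lemma Units_add_commuting_nilpotent:
  assumes u: "u \<in> Units R" and a: "a \<in> carrier R" and nil: "a [^] (k::nat) = \<zero>"
    and comm: "u \<otimes> a = a \<otimes> u"
  shows "u \<oplus> a \<in> Units R"
proof -
  have uc: "u \<in> carrier R" "inv u \<in> carrier R" using u by auto
  have inv_comm: "inv u \<otimes> a = a \<otimes> inv u" using Units_inv_commute[OF u a comm] .
  define e where "e = (\<ominus> (inv u)) \<otimes> a"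
  have ec: "e \<in> carrier R" using uc a by (simp add: e_def)
  have "e [^] k = (\<ominus> (inv u)) [^] k \<otimes> a [^] k"
    unfolding e_def using uc a inv_comm by (intro pow_mult_distrib) (simp_all add: ring_simprules)
  then have "e [^] k = \<zero>" using uc a nil by simp
  then have "\<one> \<ominus> e \<in> Units R" by (rule one_minus_nilpotent_Units[OF ec])
  moreover have "u \<oplus> a = u \<otimes> (\<one> \<ominus> e)"
    using u uc a unfolding e_def by (simp add: minus_eq l_minus r_distr m_assoc[symmetric])
  ultimately show ?thesis using u by simp
qed

lemma nilpotent_left_multiple_eq_zero:
  fixes k :: nat
  assumes carr: "b \<in> carrier R" "w \<in> carrier R" "p \<in> carrier R" "d \<in> carrier R"
    and comm: "b \<otimes> w = w \<otimes> b" and nil: "b [^] k = \<zero>"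
    and p: "p = b \<otimes> (w \<otimes> p \<oplus> p \<otimes> d)"
  shows "p = \<zero>"
proof -
  have "\<exists>q \<in> carrier R. p = b [^] j \<otimes> q" for j :: nat
  proof (induction j)
    case 0
    show ?case using carr by auto
  next
    case (Suc j)
    then obtain q where q: "q \<in> carrier R" "p = b [^] j \<otimes> q" by blast
    have "w \<otimes> b [^] j = b [^] j \<otimes> w"
      using group_commutes_pow[OF comm carr(1,2)] by simp
    then have "p = b [^] Suc j \<otimes> (w \<otimes> q \<oplus> q \<otimes> d)"
      using p carr q nat_pow_Suc2[OF carr(1)]
      by (simp add: r_distr m_assoc[symmetric])
    then show ?case using carr q by blast
  qed
  then obtain q where "q \<in> carrier R" "p = b [^] k \<otimes> q" by blast
  then show ?thesis using nil by simp
qed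

lemma involution_product_conjugate:
  assumes carr: "y \<in> carrier R" "y' \<in> carrier R" "z \<in> carrier R"
    and y': "y' \<otimes> y = \<one>" and invol: "y \<otimes> z \<otimes> (y \<otimes> z) = \<one>"
  shows "z \<otimes> y \<otimes> z = y'"
proof -
  have "y' = y' \<otimes> (y \<otimes> z \<otimes> (y \<otimes> z))" using invol carr by simp
  also have "\<dots> = (y' \<otimes> y) \<otimes> (z \<otimes> y \<otimes> z)" using carr by (simp add: m_assoc)
  finally show ?thesis using y' carr by simp
qed

lemma square_zero_eq_nilpotent_multiple_annihilated:
  fixes k :: nat
  assumes carr: "n \<in> carrier R" "b \<in> carrier R" "w \<in> carrier R"
    and nn: "n \<otimes> n = \<zero>" and nil: "b [^] k = \<zero>" and bw: "b \<otimes> w = w \<otimes> b"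
    and n_eq: "n = \<ominus> b \<ominus> b \<otimes> n \<otimes> w"
  shows "b \<otimes> n = \<zero>"
proof -
  have "b \<otimes> n \<oplus> b \<otimes> n \<otimes> w \<otimes> n = \<ominus> ((\<ominus> b \<ominus> b \<otimes> n \<otimes> w) \<otimes> n)"
    using carr by algebra
  also have "\<dots> = \<zero>"
    by (simp only: n_eq[symmetric] nn minus_zero)
  finally have "b \<otimes> n = \<ominus> (b \<otimes> n \<otimes> w \<otimes> n)"
    using carr by (intro minus_equality[symmetric]) simp_all
  also have "\<dots> = \<ominus> (b \<otimes> (\<ominus> b \<ominus> b \<otimes> n \<otimes> w) \<otimes> w \<otimes> n)"
    by (simp only: n_eq[symmetric])
  also have "\<dots> = b \<otimes> ((b \<otimes> w) \<otimes> n \<oplus> (b \<otimes> n) \<otimes> (w \<otimes> w \<otimes> n))"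
    using carr by algebra
  finally have "b \<otimes> n = b \<otimes> (w \<otimes> (b \<otimes> n) \<oplus> (b \<otimes> n) \<otimes> (w \<otimes> w \<otimes> n))"
    unfolding bw using carr by (simp add: m_assoc)
  then show ?thesis
    by (rule nilpotent_left_multiple_eq_zero[OF carr(2,3) _ _ bw nil, rotated 2])
      (use carr in simp_all)
qed

lemma unipotent_product_involution_eq_one:
  fixes k :: nat
  assumes n: "n \<in> carrier R" and b: "b \<in> carrier R"
    and nn: "n \<otimes> n = \<zero>" and nil: "b [^] k = \<zero>" and two: "\<one> \<oplus> \<one> \<in> Units R"
    and invol: "(\<one> \<oplus> n) \<otimes> (\<one> \<oplus> b) \<otimes> ((\<one> \<oplus> n) \<otimes> (\<one> \<oplus> b)) = \<one>"
  shows "(\<one> \<oplus> n) \<otimes> (\<one> \<oplus> b) = \<one>"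
proof -
  define z c where "z = \<one> \<oplus> b" and "c = \<one> \<oplus> \<one> \<oplus> b"
  have carr: "z \<in> carrier R" "c \<in> carrier R" using b by (simp_all add: z_def c_def)
  have c_unit: "c \<in> Units R"
    unfolding c_def using b
    by (intro Units_add_commuting_nilpotent[OF two b nil]) (simp add: ring_simprules)
  then have ci: "inv c \<in> carrier R" "c \<otimes> inv c = \<one>" "inv c \<otimes> c = \<one>" by auto
  have "(\<one> \<ominus> n) \<otimes> (\<one> \<oplus> n) = \<one>" using n nn by algebra
  then have zyz: "z \<otimes> (\<one> \<oplus> n) \<otimes> z = \<one> \<ominus> n"
    using involution_product_conjugate invol n carr unfolding z_def by simp
  have "n \<otimes> c \<oplus> (b \<otimes> c \<oplus> b \<otimes> n \<otimes> z) = z \<otimes> (\<one> \<oplus> n) \<otimes> z \<ominus> (\<one> \<ominus> n)"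
    using n b unfolding z_def c_def by algebra
  also have "\<dots> = \<zero>" using zyz n by algebra
  finally have nc: "n \<otimes> c = \<ominus> (b \<otimes> c \<oplus> b \<otimes> n \<otimes> z)"
    using n b carr by (simp add: minus_equality[symmetric])
  have n_cancel: "n = n \<otimes> c \<otimes> inv c" using n carr ci by (simp add: m_assoc)
  define w where "w = z \<otimes> inv c"
  have wc: "w \<in> carrier R" using carr ci by (simp add: w_def)
  have n_eq: "n = \<ominus> b \<ominus> b \<otimes> n \<otimes> w"
    using n_cancel unfolding nc w_def using n b carr ci by algebra
  have "b \<otimes> c = c \<otimes> b" "b \<otimes> z = z \<otimes> b" using b unfolding c_def z_def by algebra+
  then have "b \<otimes> w = w \<otimes> b"
    using Units_inv_commute[OF c_unit b] b carr ci unfolding w_def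
    by (simp add: m_assoc[symmetric]) (simp add: m_assoc)
  then have "b \<otimes> n = \<zero>"
    using square_zero_eq_nilpotent_multiple_annihilated n b wc nn nil n_eq by blast
  then have "n \<otimes> c = \<ominus> (b \<otimes> c)"
    using nc b carr by simp
  then have "b = \<ominus> n"
    using n_cancel n b carr ci by (simp add: l_minus m_assoc)
  then show ?thesis using n nn by algebra
qed

end

lemma two_neq_zero_if_CHAR_neq_2:
  assumes "CHAR('a::{semiring_1, zero_neq_one}) \<noteq> 2"
  shows "(2::'a) \<noteq> 0"
proof
  assume "(2::'a) = 0"
  then have "CHAR('a) dvd 2" by (metis of_nat_eq_0_iff_char_dvd of_nat_numeral)
  then have "CHAR('a) \<le> 2" "CHAR('a) \<noteq> 0"
    by (simp add: dvd_imp_le, metis dvd_0_left zero_neq_numeral)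
  then show False using assms CHAR_not_1 by (auto simp: numeral_2_eq_2 le_Suc_eq)
qed

lemma eval_poly_mat_X_minus_one_square:
  fixes A :: "'a::field mat"
  assumes A: "A \<in> carrier_mat n n"
  shows "eval_poly_mat ([:-1, 1:] ^ 2) A = (A - 1\<^sub>m n) * (A - 1\<^sub>m n)"
proof -
  have one_smult: "(1::'a) \<cdot>\<^sub>m B = B" for B :: "'a mat"
    by (rule eq_matI) auto
  have "eval_poly_mat ([:-1, 1:] ^ 2) A = 1\<^sub>m n + ((-2) \<cdot>\<^sub>m A + A * A)"
    using A by (simp add: eval_poly_mat_def power2_eq_square mult_add_distrib_mat[of _ n n _ n]
        mult_smult_distrib[of _ n n _ n] one_smult)
  moreover have "(A - 1\<^sub>m n) * (A - 1\<^sub>m n) = A * A - A - (A - 1\<^sub>m n)"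
    using A by (subst minus_mult_distrib_mat, auto, subst mult_minus_distrib_mat, auto)
  ultimately show ?thesis
    using A by (intro eq_matI) auto
qed

lemma regular_unipotent_nilpotent:
  assumes z: "z \<in> carrier_mat n n" and "regular_unipotent n z"
  shows "(z - 1\<^sub>m n) ^\<^sub>m n = 0\<^sub>m n n"
proof -
  from assms obtain P Q where "similar_mat_wit z (jordan_block n 1) P Q"
    unfolding regular_unipotent_def similar_mat_def by auto
  then have P: "P \<in> carrier_mat n n" and Q: "Q \<in> carrier_mat n n" and PQ: "P * Q = 1\<^sub>m n"
    and QP: "Q * P = 1\<^sub>m n" and zJ: "z = P * jordan_block n 1 * Q"
    using z unfolding similar_mat_wit_def Let_def by auto
  have J0: "jordan_block n (1::'a) - 1\<^sub>m n = jordan_block n 0"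
    by (auto intro!: eq_matI)
  have "P * jordan_block n 0 * Q = P * jordan_block n 1 * Q - P * 1\<^sub>m n * Q"
    unfolding J0[symmetric] using P Q
    by (simp add: mult_minus_distrib_mat[of _ n n _ n] minus_mult_distrib_mat[of _ n n _ _ n])
  then have "z - 1\<^sub>m n = P * jordan_block n 0 * Q" using zJ PQ P by simp
  then have "similar_mat_wit (z - 1\<^sub>m n) (jordan_block n 0) P Q"
    using P Q PQ QP z unfolding similar_mat_wit_def Let_def by auto
  moreover have "jordan_block n (0::'a) ^\<^sub>m n = 0\<^sub>m n n"
    unfolding jordan_block_zero_pow by (auto intro!: eq_matI)
  ultimately show ?thesis using similar_mat_wit_pow_id[of _ _ P Q n] P Q by simp
qed

lemma mat_unipotent_product_involution_eq_one:
  fixes y z :: "'a::field mat"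
  assumes "CHAR('a) \<noteq> 2" and y: "y \<in> carrier_mat n n" and z: "z \<in> carrier_mat n n"
    and "(y - 1\<^sub>m n) * (y - 1\<^sub>m n) = 0\<^sub>m n n" and "(z - 1\<^sub>m n) ^\<^sub>m k = 0\<^sub>m n n"
    and "y * z * (y * z) = 1\<^sub>m n"
  shows "y * z = 1\<^sub>m n"
proof -
  interpret R: ring "ring_mat TYPE('a) n ()" by (rule ring_mat)
  have "1\<^sub>m n + 1\<^sub>m n \<in> Units (ring_mat TYPE('a) n ())"
  proof (rule det_non_zero_imp_unit)
    have two: "1\<^sub>m n + 1\<^sub>m n = (2::'a) \<cdot>\<^sub>m 1\<^sub>m n" by (rule eq_matI) auto
    show "det (1\<^sub>m n + 1\<^sub>m n :: 'a mat) \<noteq> 0"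
      unfolding two using two_neq_zero_if_CHAR_neq_2[OF assms(1)] by simp
  qed simp
  moreover have "1\<^sub>m n + (y - 1\<^sub>m n) = y" "1\<^sub>m n + (z - 1\<^sub>m n) = z"
    using y z by (auto intro!: eq_matI)
  moreover have "y - 1\<^sub>m n \<in> carrier_mat n n" "z - 1\<^sub>m n \<in> carrier_mat n n"
    using y z by auto
  ultimately show ?thesis
    using R.unipotent_product_involution_eq_one[of "y - 1\<^sub>m n" "z - 1\<^sub>m n" k] assms y z
    by (simp add: ring_mat_simps pow_mat_ring_pow[symmetric])
qed

theorem lemma4p1:
  fixes x y z :: "'a::field mat" and n :: nat
  assumes "CHAR('a) \<noteq> 2"
    and "x \<in> carrier_mat n n" and "det x = 1"
    and "x * x = 1\<^sub>m n" and "x \<noteq> 1\<^sub>m n"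
    and "y \<in> carrier_mat n n" and "det y = 1"
    and "is_minimal_polynomial y ([:-1, 1:] ^ 2)"
    and "z \<in> carrier_mat n n" and "det z = 1"
    and "regular_unipotent n z"
  shows "x * y * z \<noteq> 1\<^sub>m n"
proof
  assume xyz: "x * y * z = 1\<^sub>m n"
  have x: "x \<in> carrier_mat n n" and y: "y \<in> carrier_mat n n" and z: "z \<in> carrier_mat n n"
    using assms by auto
  have "y * z = x * x * (y * z)" using assms(4) y z by simp
  also have "\<dots> = x * (x * y * z)" using x y z by (simp add: assoc_mult_mat[of _ n n _ n _ n])
  finally have yz: "y * z = x" using xyz x by simp
  have "(y - 1\<^sub>m n) * (y - 1\<^sub>m n) = 0\<^sub>m n n"
    using assms(8) y eval_poly_mat_X_minus_one_square[OF y]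
    unfolding is_minimal_polynomial_def by simp
  moreover have "(z - 1\<^sub>m n) ^\<^sub>m n = 0\<^sub>m n n"
    using regular_unipotent_nilpotent[OF z assms(11)] .
  ultimately have "y * z = 1\<^sub>m n"
    using mat_unipotent_product_involution_eq_one[OF assms(1) y z] yz assms(4) by simp
  then show False using yz assms(5) by simp
qed

end
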